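(* Let $\alpha,\beta\in(0,1)$, $m=\alpha n^\beta$, $c\ge2$, and $\lambda^*=1/(1-\beta)$. Then for all $\lambda<\lambda^*$ there exists $N>0$ such that for all $n>N$, $\frac{\lambda m}{\log_2 n}\le w^*(n,2^{m+c})$.
   Context: For $q\ge1$, $w^*(n,q)=\max\{w\ge0:\sum_{j=1}^w\binom{n}{j}\le q-1\}$. *)

theory Defs
  imports Complex_Main
begin

definition wstar :: "nat \<Rightarrow> real \<Rightarrow> nat" where
  "wstar n q = Max {w::nat. (\<Sum>j=1..w. real (n choose j)) \<le> q - 1}"

end

theory Submission
  imports Defs "HOL-Real_Asymp.Real_Asymp"
begin

text \<open>
  Put \<open>L = log\<^sub>2 n\<close> and \<open>r = \<lambda> m / L\<close>. Since \<open>\<Sum>\<^sub>j\<^sub>=\<^sub>1\<^sup>w (n choose j) \<le> (e n / w)\<^sup>w\<close>,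
  the weight \<open>w = \<lceil>r\<rceil>\<close> is admissible for \<open>q = 2\<^bsup>m+c\<^esup>\<close> as soon as
  \<open>(r + 1) log\<^sub>2 (e n / r) \<le> m + c - 1\<close>. Now
  \<open>log\<^sub>2 (e n / r) = (1 - \<beta>) L + O(log L)\<close>, so the left-hand side is
  \<open>\<lambda> (1 - \<beta>) m + o(m)\<close>, which is eventually below \<open>m + c - 1\<close> because
  \<open>\<lambda> (1 - \<beta>) < 1\<close>.
\<close>

lemma sum_binomial_le_exp_mult_power:
  fixes n w :: nat
  assumes "1 \<le> w" "w \<le> n"
  shows "(\<Sum>j=1..w. real (n choose j)) \<le> exp (real w) * (real n / real w) ^ w"
proof -
  define x where "x = real w / real n"
  have x0: "0 < x" and x1: "x \<le> 1" using assms by (auto simp: x_def)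
  have "(\<Sum>j=1..w. real (n choose j)) \<le> (\<Sum>j=1..w. real (n choose j) * x ^ j / x ^ w)"
  proof (rule sum_mono)
    fix j assume "j \<in> {1..w}"
    hence "x ^ w \<le> x ^ j" using x0 x1 by (intro power_decreasing) auto
    hence "1 \<le> x ^ j / x ^ w" using x0 by simp
    thus "real (n choose j) \<le> real (n choose j) * x ^ j / x ^ w"
      using mult_left_mono[of 1 "x ^ j / x ^ w" "real (n choose j)"] by simp
  qed
  also have "\<dots> = (\<Sum>j=1..w. real (n choose j) * x ^ j) / x ^ w"
    by (simp add: sum_divide_distrib)
  also have "(\<Sum>j=1..w. real (n choose j) * x ^ j) \<le> (\<Sum>j\<le>n. real (n choose j) * x ^ j)"
    by (rule sum_mono2) (use assms x0 in auto)
  also have "(\<Sum>j\<le>n. real (n choose j) * x ^ j) = (x + 1) ^ n"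
    using binomial_ring[of x 1 n] by simp
  also have "(x + 1) ^ n \<le> exp x ^ n"
    using x0 by (intro power_mono) (auto simp: add.commute exp_ge_add_one_self)
  also have "exp x ^ n = exp (real w)"
    using assms by (simp add: exp_of_nat_mult[symmetric] x_def)
  finally have "(\<Sum>j=1..w. real (n choose j)) \<le> exp (real w) / x ^ w"
    using x0 by (simp add: divide_right_mono)
  also have "\<dots> = exp (real w) * (real n / real w) ^ w"
    using assms by (simp add: x_def power_divide)
  finally show ?thesis .
qed

lemma sum_binomial_from_1:
  assumes "n \<le> v"
  shows "(\<Sum>j=1..v. real (n choose j)) = 2 ^ n - 1"
proof -
  have "(\<Sum>j=1..v. real (n choose j)) = (\<Sum>j=1..n. real (n choose j))"
    using assms by (intro sum.mono_neutral_right) auto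
  also have "\<dots> = (\<Sum>j\<le>n. real (n choose j)) - 1"
    by (simp add: atMost_atLeast0 sum.atLeast_Suc_atMost)
  also have "(\<Sum>j\<le>n. real (n choose j)) = 2 ^ n"
    using choose_row_sum[of n] by (metis of_nat_numeral of_nat_power of_nat_sum)
  finally show ?thesis .
qed

text \<open>For \<open>q \<ge> 2\<^sup>n\<close> the set in the definition of \<open>wstar\<close> is infinite and
  \<open>Max\<close> returns a junk value, hence the hypothesis \<open>q < 2\<^sup>n\<close>.\<close>

lemma le_wstar:
  assumes "q < 2 ^ n" "(\<Sum>j=1..w. real (n choose j)) \<le> q - 1"
  shows "w \<le> wstar n q"
proof -
  let ?S = "{v. (\<Sum>j=1..v. real (n choose j)) \<le> q - 1}"
  have "?S \<subseteq> {..<n}"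
  proof
    fix v assume "v \<in> ?S"
    thus "v \<in> {..<n}"
      using assms(1) sum_binomial_from_1[of n v] by (cases "n \<le> v") auto
  qed
  hence "finite ?S" by (rule finite_subset) simp
  thus ?thesis using assms(2) unfolding wstar_def by simp
qed

lemma le_wstar_powr:
  fixes n :: nat and r s :: real
  assumes "0 < r" "r + 1 \<le> n" "s < n" "(r + 1) * log 2 (exp 1 * n / r) \<le> s - 1"
  shows "r \<le> wstar n (2 powr s)"
proof -
  define w where "w = nat \<lceil>r\<rceil>"
  have wr: "r \<le> w" "w \<le> r + 1"
    using assms(1) by (auto simp: w_def)
  have w1: "1 \<le> w" and wn: "w \<le> n"
    using wr assms(1,2) by linarith+
  have "real w \<le> exp 1 * n"
    using wn mult_right_mono[of 1 "exp 1" "real n"] by simp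
  hence log_nonneg: "0 \<le> log 2 (exp 1 * n / w)"
    using w1 by simp
  have log_w_le_log_r: "log 2 (exp 1 * n / w) \<le> log 2 (exp 1 * n / r)"
    using wr(1) assms(1) w1 wn by (intro log_mono divide_left_mono) auto
  have "exp (real w) * (real n / real w) ^ w = (exp 1 * n / w) ^ w"
    unfolding times_divide_eq_right[symmetric] power_mult_distrib
    using exp_of_nat_mult[of w "1::real"] by simp
  also have "\<dots> = 2 powr (w * log 2 (exp 1 * n / w))"
    using w1 wn by (simp add: powr_def log_def ln_realpow[symmetric])
  also have "\<dots> \<le> 2 powr ((r + 1) * log 2 (exp 1 * n / r))"
    using wr log_nonneg log_w_le_log_r by (intro powr_mono mult_mono) auto
  also have "\<dots> \<le> 2 powr (s - 1)"
    using assms(4) by simp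
  also have "\<dots> \<le> 2 powr s - 1"
  proof -
    have "0 \<le> (r + 1) * log 2 (exp 1 * n / r)"
      using assms(1) log_nonneg log_w_le_log_r by simp
    hence "0 \<le> s - 1" using assms(4) by linarith
    hence "1 \<le> 2 powr (s - 1)" by (intro ge_one_powr_ge_zero) auto
    moreover have "2 powr s = 2 * 2 powr (s - 1)"
      by (simp add: powr_diff)
    ultimately show ?thesis by simp
  qed
  finally have "w \<le> wstar n (2 powr s)"
    using sum_binomial_le_exp_mult_power[OF w1 wn] assms(3)
    by (intro le_wstar) (auto simp: powr_realpow[symmetric])
  thus ?thesis using wr by linarith
qed

lemma eventually_le_wstar_powr_hypotheses:
  fixes \<alpha> \<beta> c lam :: real
  assumes "0 < \<alpha>" "0 < \<beta>" "\<beta> < 1" "0 < lam" "lam * (1 - \<beta>) < 1"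
  shows "\<forall>\<^sub>F x in at_top. let m = \<alpha> * x powr \<beta>; r = lam * m / log 2 x in
           0 < r \<and> r + 1 \<le> x \<and> m + c < x \<and> (r + 1) * log 2 (exp 1 * x / r) \<le> m + c - 1"
proof -
  define d where "d = 1 - lam * (1 - \<beta>)"
  define K where "K = log 2 (exp 1) - log 2 lam - log 2 \<alpha>"
  have "0 < d" using assms(5) by (simp add: d_def)
  have "\<forall>\<^sub>F x in at_top. lam * (\<alpha> * x powr \<beta>) * (log 2 (log 2 x) + K) / log 2 x
      + (1 - \<beta>) * log 2 x + log 2 (log 2 x) + K \<le> d * (\<alpha> * x powr \<beta>) + c - 1"
    unfolding log_def using assms \<open>0 < d\<close> by real_asymp
  moreover have "\<forall>\<^sub>F x in at_top. 0 < lam * (\<alpha> * x powr \<beta>) / log 2 x"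
    unfolding log_def using assms by real_asymp
  moreover have "\<forall>\<^sub>F x in at_top. lam * (\<alpha> * x powr \<beta>) / log 2 x + 1 \<le> x"
    unfolding log_def using assms by real_asymp
  moreover have "\<forall>\<^sub>F x in at_top. \<alpha> * x powr \<beta> + c < x"
    using assms by real_asymp
  moreover have "\<forall>\<^sub>F x in at_top. 1 < (x::real)"
    by (rule eventually_gt_at_top)
  ultimately show ?thesis
  proof eventually_elim
    case (elim x)
    define m L where "m = \<alpha> * x powr \<beta>" and "L = log 2 x"
    define r where "r = lam * m / L"
    have "0 < m" "0 < L" using assms elim by (auto simp: m_def L_def)
    have "log 2 r = log 2 lam + log 2 \<alpha> + \<beta> * L - log 2 L"
      using assms \<open>0 < m\<close> \<open>0 < L\<close> elim(5)
      by (simp add: r_def m_def log_divide log_mult log_powr flip: L_def)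
    moreover have "0 < r" using assms \<open>0 < m\<close> \<open>0 < L\<close> by (simp add: r_def)
    ultimately have "log 2 (exp 1 * x / r) = (1 - \<beta>) * L + log 2 L + K"
      using elim by (simp add: log_divide log_mult K_def L_def algebra_simps)
    hence "(r + 1) * log 2 (exp 1 * x / r) = (r + 1) * ((1 - \<beta>) * L + log 2 L + K)"
      by simp
    also have "\<dots> = lam * (1 - \<beta>) * m + (lam * m * (log 2 L + K) / L + (1 - \<beta>) * L + log 2 L + K)"
      using \<open>0 < L\<close> by (simp add: r_def field_simps)
    also have "\<dots> \<le> lam * (1 - \<beta>) * m + (d * m + c - 1)"
      using elim(1) by (simp add: m_def L_def)
    also have "\<dots> = m + c - 1"
      by (simp add: d_def algebra_simps)
    finally show ?case
      using elim(2-4) unfolding Let_def m_def[symmetric] L_def[symmetric] r_def[symmetric] by simp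
  qed
qed

theorem corollary2:
  fixes \<alpha> \<beta> c :: real
  assumes "0 < \<alpha>" "\<alpha> < 1" "0 < \<beta>" "\<beta> < 1" "c \<ge> 2"
  shows "\<forall>lam::real. lam < 1 / (1 - \<beta>) \<longrightarrow>
           (\<exists>N::real. N > 0 \<and>
              (\<forall>n::nat. real n > N \<longrightarrow>
                 (let m = \<alpha> * real n powr \<beta> in
                  lam * m / log 2 (real n) \<le> real (wstar n (2 powr (m + c))))))"
proof (intro allI impI)
  fix lam :: real
  assume "lam < 1 / (1 - \<beta>)"
  hence "lam * (1 - \<beta>) < 1" using assms(4) by (simp add: field_simps)
  show "\<exists>N>0. \<forall>n::nat. real n > N \<longrightarrow> (let m = \<alpha> * real n powr \<beta> in
          lam * m / log 2 (real n) \<le> real (wstar n (2 powr (m + c))))"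
  proof (cases "0 < lam")
    case True
    then obtain N where N: "\<And>x. x \<ge> N \<Longrightarrow> let m = \<alpha> * x powr \<beta>; r = lam * m / log 2 x in
        0 < r \<and> r + 1 \<le> x \<and> m + c < x \<and> (r + 1) * log 2 (exp 1 * x / r) \<le> m + c - 1"
      using eventually_le_wstar_powr_hypotheses[OF assms(1,3,4) _ \<open>lam * (1 - \<beta>) < 1\<close>]
      unfolding eventually_at_top_linorder by blast
    show ?thesis
      using N by (intro exI[of _ "max N 1"]) (auto simp: Let_def intro!: le_wstar_powr)
  next
    case False
    have "lam * (\<alpha> * real n powr \<beta>) / log 2 (real n) \<le> 0" if "1 < n" for n :: nat
      using False that assms(1) by (intro divide_nonpos_pos mult_nonpos_nonneg) auto
    thus ?thesis by (intro exI[of _ 1]) (force simp: Let_def intro: order.trans[OF _ of_nat_0_le_iff])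
  qed
qed

end
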